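(* Let $X$ be a finite set with $|X|=n$, $0\notin X$, $W=X\cup\{0\}$. Let $\mathfrak{V}$ be a $\big(\binom{n}{2}_{\,n-2}\ \binom{n}{3}_{\,3}\big)$-configuration whose point set is $\mathcal{P}_2(X)$, and let $\mathfrak{M}$ be the structure with point set $\mathcal{P}_2(W)$ whose lines are the lines of $\mathfrak{V}$ together with all sets $\{\{0,x\},\{0,y\},\{x,y\}\}$ for distinct $x,y\in X$. Let $H$ be a hyperplane of $\mathfrak{M}$, and on $X$ define the equivalence relation $x\sim y$ iff $x=y$, or $x\neq y$ and $\{x,y\}\in H$. If $\mathfrak{a},\mathfrak{b}$ are equivalence classes of $\sim$ with $\{0,x\}\in H$ for all $x\in\mathfrak{a}\cup\mathfrak{b}$, then $\mathfrak{a}=\mathfrak{b}$.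
   Context: $\mathcal{P}_2(Y)$ denotes the set of $2$-element subsets of $Y$. A $(v_r\ b_k)$-configuration is a partial linear space with $v$ points and $b$ lines, each point on exactly $r$ lines and each line containing exactly $k$ points. A subspace is a set of points containing every line that meets it in at least two points; a hyperplane is a proper subspace meeting every line. (A point $x\in X$ is identified with the point $\{0,x\}$, so "$\mathfrak{a}\subseteq H$" means $\{0,x\}\in H$ for all $x\in\mathfrak{a}$.) *)

theory Defs
  imports Main
begin

definition P2 :: "'a set \<Rightarrow> 'a set set" where
  "P2 Y = {A. A \<subseteq> Y \<and> card A = 2}"

definition partial_linear_space :: "'p set \<Rightarrow> 'p set set \<Rightarrow> bool" where
  "partial_linear_space P L \<longleftrightarrow>
     (\<forall>l\<in>L. l \<subseteq> P \<and> finite l \<and> card l \<ge> 2) \<and>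
     (\<forall>p\<in>P. \<forall>q\<in>P. p \<noteq> q \<longrightarrow> card {l\<in>L. p \<in> l \<and> q \<in> l} \<le> 1)"

definition configuration ::
  "'p set \<Rightarrow> 'p set set \<Rightarrow> nat \<Rightarrow> nat \<Rightarrow> nat \<Rightarrow> nat \<Rightarrow> bool" where
  "configuration P L v r b k \<longleftrightarrow>
     partial_linear_space P L \<and> finite P \<and> finite L \<and>
     card P = v \<and> card L = b \<and>
     (\<forall>p\<in>P. card {l\<in>L. p \<in> l} = r) \<and>
     (\<forall>l\<in>L. card l = k)"

definition subspace :: "'p set \<Rightarrow> 'p set set \<Rightarrow> 'p set \<Rightarrow> bool" where
  "subspace P L S \<longleftrightarrow> S \<subseteq> P \<and>
     (\<forall>l\<in>L. (\<exists>p q. p \<noteq> q \<and> p \<in> l \<inter> S \<and> q \<in> l \<inter> S) \<longrightarrow> l \<subseteq> S)"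

definition hyperplane :: "'p set \<Rightarrow> 'p set set \<Rightarrow> 'p set \<Rightarrow> bool" where
  "hyperplane P L H \<longleftrightarrow> subspace P L H \<and> H \<noteq> P \<and> (\<forall>l\<in>L. l \<inter> H \<noteq> {})"

definition ext_lines :: "'a \<Rightarrow> 'a set \<Rightarrow> 'a set set set \<Rightarrow> 'a set set set" where
  "ext_lines z X LV = LV \<union>
     {{{z, x}, {z, y}, {x, y}} | x y. x \<in> X \<and> y \<in> X \<and> x \<noteq> y}"

definition hrel :: "'a set \<Rightarrow> 'a set set \<Rightarrow> 'a rel" where
  "hrel X H = {(x, y). x \<in> X \<and> y \<in> X \<and> (x = y \<or> (x \<noteq> y \<and> {x, y} \<in> H))}"

end

theory Submission
  imports Defs
begin

text \<open>If \<open>{0,x}\<close> and \<open>{0,y}\<close> lie in a subspace \<open>H\<close> of the extension, then so does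
  the third point \<open>{x,y}\<close> of the triangle line through them, i.e. \<open>x \<sim> y\<close>.
  Hence any two points of the union of the two classes are related, which forces the
  classes to coincide.\<close>

lemma subspace_line_subset:
  assumes "subspace P L S" "l \<in> L" "p \<noteq> q" "p \<in> l" "q \<in> l" "p \<in> S" "q \<in> S"
  shows "l \<subseteq> S"
  using assms unfolding subspace_def by blast

lemma triangle_in_ext_lines:
  assumes "x \<in> X" "y \<in> X" "x \<noteq> y"
  shows "{{z, x}, {z, y}, {x, y}} \<in> ext_lines z X LV"
  using assms unfolding ext_lines_def by blast

lemma hrel_if_joined_to_new_point:
  assumes H: "subspace P (ext_lines z X LV) H" and "z \<notin> X"
    and "x \<in> X" "y \<in> X" "{z, x} \<in> H" "{z, y} \<in> H"
  shows "(x, y) \<in> hrel X H"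
proof (cases "x = y")
  case True
  then show ?thesis using \<open>x \<in> X\<close> by (simp add: hrel_def)
next
  case False
  have "{z, x} \<noteq> {z, y}"
    using False \<open>z \<notin> X\<close> \<open>x \<in> X\<close> by (auto simp: doubleton_eq_iff)
  with H triangle_in_ext_lines[OF \<open>x \<in> X\<close> \<open>y \<in> X\<close> False]
  have "{{z, x}, {z, y}, {x, y}} \<subseteq> H"
    by (rule subspace_line_subset) (use \<open>{z, x} \<in> H\<close> \<open>{z, y} \<in> H\<close> in simp_all)
  then show ?thesis using False assms(3,4) by (simp add: hrel_def)
qed

lemma quotient_eq_if_related:
  assumes "refl_on X r" "A \<in> X // r" "B \<in> X // r"
    and related: "\<forall>a\<in>A. \<forall>b\<in>B. (a, b) \<in> r \<and> (b, a) \<in> r"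
  shows "A = B"
proof -
  obtain x where x: "A = r `` {x}" "x \<in> X" using \<open>A \<in> X // r\<close> by (rule quotientE)
  obtain y where y: "B = r `` {y}" "y \<in> X" using \<open>B \<in> X // r\<close> by (rule quotientE)
  have "x \<in> A" "y \<in> B" using x y \<open>refl_on X r\<close> by (auto simp: refl_on_def)
  then show ?thesis using x(1) y(1) related by blast
qed

theorem lemma3p3:
  fixes X :: "'a set" and z :: 'a and n :: nat
    and LV :: "'a set set set" and H :: "'a set set" and A B :: "'a set"
  assumes "finite X" and "card X = n" and "z \<notin> X"
    and "configuration (P2 X) LV (n choose 2) (n - 2) (n choose 3) 3"
    and "hyperplane (P2 (insert z X)) (ext_lines z X LV) H"
    and "A \<in> X // hrel X H" and "B \<in> X // hrel X H"
    and "\<forall>x\<in>A \<union> B. {z, x} \<in> H"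
  shows "A = B"
proof (rule quotient_eq_if_related)
  show "refl_on X (hrel X H)" by (simp add: refl_on_def hrel_def)
  have H: "subspace (P2 (insert z X)) (ext_lines z X LV) H"
    using assms(5) by (simp add: hyperplane_def)
  have "A \<union> B \<subseteq> X"
    using assms(6,7) by (auto simp: quotient_def hrel_def)
  then show "\<forall>a\<in>A. \<forall>b\<in>B. (a, b) \<in> hrel X H \<and> (b, a) \<in> hrel X H"
    using hrel_if_joined_to_new_point[OF H \<open>z \<notin> X\<close>] assms(8) by blast
qed (fact assms)+

end
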